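(* Let $d\ge1$, $D=\{1,\dots,d\}$, let $\Pi,Q$ be $d\times d$ stochastic matrices indexed by $D$, let $\pi=(\pi_j)_{j\in D}$ be a probability vector, and let $\varphi^{(O)}_H$ be the quantum Markov chain on $\mathcal{A}_H=\bigotimes_{\mathbb{N}}\mathcal{M}_d$ with initial state $\varphi_{H,0}(\cdot)=\operatorname{Tr}(W_0\,\cdot)$, $W_0=\sum_{j\in D}\pi_je_{jj}$, and transition expectation $\mathcal{E}^{(O)}_H(a\otimes b)=a\diamond P_{H,O}(\mathbf{1}_d)\diamond P_H(b)$. Let $e\in\mathcal{M}_d$ be a projection, and write $e^\perp=\mathbf{1}_d-e=(e^\perp_{ij})_{i,j\in D}$. If $$q:=\sum_{i,j\in D}e^\perp_{ij}<\frac1d,$$ then $e$ is $\varphi^{(O)}_H$-recurrent.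
   Context: $\mathcal{M}_d$: complex $d\times d$ matrices, identity $\mathbf{1}_d$, matrix units $e_{ij}$; $\diamond$ is the Schur (entrywise) product; stochastic matrices have nonnegative entries and row sums $1$. $P_H(A)=\sum_{i,j,k,l}\sqrt{\Pi_{ik}\Pi_{jl}}\,a_{kl}e_{ij}$, $P_{H,O}(B)=\sum_{i,j,k,l}\sqrt{Q_{ik}Q_{jl}}\,b_{kl}e_{ij}$. ($\varphi^{(O)}_H$ is the restriction to the hidden algebra of the Bi-entangled hidden Markov chain built from $\Pi$, $Q$ and $\varphi_{H,0}$.) $j_{H_m}(a)$ denotes $a$ at site $m$ of $\mathcal{A}_H$; the chain satisfies $\varphi^{(O)}_H(j_{H_0}(a_0)\cdots j_{H_n}(a_n))=\varphi_{H,0}(\mathcal{E}^{(O)}_H(a_0\otimes\mathcal{E}^{(O)}_H(a_1\otimes\cdots\mathcal{E}^{(O)}_H(a_n\otimes\mathbf{1}_d)\cdots)))$. For the projection $e$: $\tau_{e;0}=j_{H_0}(e)$, $\tau_{e;k}=j_{H_0}(e^\perp)\cdots j_{H_{k-1}}(e^\perp)j_{H_k}(e)$, and $e\otimes\tau_{e;n}:=j_{H_0}(e)j_{H_1}(e^\perp)\cdots j_{H_n}(e^\perp)j_{H_{n+1}}(e)$. The projection $e$ is $\varphi^{(O)}_H$-recurrent if $\varphi^{(O)}_H(j_{H_0}(e))\ne0$ and $\frac{1}{\varphi^{(O)}_H(j_{H_0}(e))}\sum_{n\ge0}\varphi^{(O)}_H(e\otimes\tau_{e;n})=1$. *)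

theory Defs
  imports Complex_Main
begin

text \<open>Complex d x d matrices are represented as functions nat => nat => complex,
  indexed by D = {1..d}; entries outside D are irrelevant.\<close>

type_synonym cmat = "nat \<Rightarrow> nat \<Rightarrow> complex"

definition idx :: "nat \<Rightarrow> nat set" where
  "idx d = {1..d}"

definition one_m :: cmat where
  "one_m = (\<lambda>i j. if i = j then 1 else 0)"

definition mmult :: "nat \<Rightarrow> cmat \<Rightarrow> cmat \<Rightarrow> cmat" where
  "mmult d a b = (\<lambda>i j. \<Sum>k\<in>idx d. a i k * b k j)"

definition mtrace :: "nat \<Rightarrow> cmat \<Rightarrow> complex" where
  "mtrace d a = (\<Sum>j\<in>idx d. a j j)"

definition schur :: "cmat \<Rightarrow> cmat \<Rightarrow> cmat" where
  "schur a b = (\<lambda>i j. a i j * b i j)"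

definition stochastic :: "nat \<Rightarrow> (nat \<Rightarrow> nat \<Rightarrow> real) \<Rightarrow> bool" where
  "stochastic d P \<longleftrightarrow> (\<forall>i\<in>idx d. \<forall>j\<in>idx d. 0 \<le> P i j) \<and> (\<forall>i\<in>idx d. (\<Sum>j\<in>idx d. P i j) = 1)"

definition prob_vector :: "nat \<Rightarrow> (nat \<Rightarrow> real) \<Rightarrow> bool" where
  "prob_vector d p \<longleftrightarrow> (\<forall>j\<in>idx d. 0 \<le> p j) \<and> (\<Sum>j\<in>idx d. p j) = 1"

definition is_projection :: "nat \<Rightarrow> cmat \<Rightarrow> bool" where
  "is_projection d e \<longleftrightarrow> (\<forall>i\<in>idx d. \<forall>j\<in>idx d. mmult d e e i j = e i j) \<and>
                          (\<forall>i\<in>idx d. \<forall>j\<in>idx d. cnj (e j i) = e i j)"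

definition e_perp :: "cmat \<Rightarrow> cmat" where
  "e_perp e = (\<lambda>i j. one_m i j - e i j)"

definition P_H :: "nat \<Rightarrow> (nat \<Rightarrow> nat \<Rightarrow> real) \<Rightarrow> cmat \<Rightarrow> cmat" where
  "P_H d Pi A = (\<lambda>i j. \<Sum>k\<in>idx d. \<Sum>l\<in>idx d. complex_of_real (sqrt (Pi i k * Pi j l)) * A k l)"

definition P_HO :: "nat \<Rightarrow> (nat \<Rightarrow> nat \<Rightarrow> real) \<Rightarrow> cmat \<Rightarrow> cmat" where
  "P_HO d Q B = (\<lambda>i j. \<Sum>k\<in>idx d. \<Sum>l\<in>idx d. complex_of_real (sqrt (Q i k * Q j l)) * B k l)"

definition trans_exp :: "nat \<Rightarrow> (nat \<Rightarrow> nat \<Rightarrow> real) \<Rightarrow> (nat \<Rightarrow> nat \<Rightarrow> real) \<Rightarrow> cmat \<Rightarrow> cmat \<Rightarrow> cmat" where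
  "trans_exp d Pi Q a b = schur (schur a (P_HO d Q one_m)) (P_H d Pi b)"

fun chain_nest :: "nat \<Rightarrow> (nat \<Rightarrow> nat \<Rightarrow> real) \<Rightarrow> (nat \<Rightarrow> nat \<Rightarrow> real) \<Rightarrow> cmat list \<Rightarrow> cmat" where
  "chain_nest d Pi Q [] = one_m"
| "chain_nest d Pi Q (a # as) = trans_exp d Pi Q a (chain_nest d Pi Q as)"

definition W0 :: "(nat \<Rightarrow> real) \<Rightarrow> cmat" where
  "W0 p = (\<lambda>i j. if i = j then complex_of_real (p i) else 0)"

definition phi_H0 :: "nat \<Rightarrow> (nat \<Rightarrow> real) \<Rightarrow> cmat \<Rightarrow> complex" where
  "phi_H0 d p x = mtrace d (mmult d (W0 p) x)"

text \<open>phi_H^(O)(j_{H_0}(a_0) ... j_{H_n}(a_n)) for the list [a_0,...,a_n].\<close>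
definition phi_HO :: "nat \<Rightarrow> (nat \<Rightarrow> nat \<Rightarrow> real) \<Rightarrow> (nat \<Rightarrow> nat \<Rightarrow> real) \<Rightarrow> (nat \<Rightarrow> real) \<Rightarrow> cmat list \<Rightarrow> complex" where
  "phi_HO d Pi Q p as = phi_H0 d p (chain_nest d Pi Q as)"

text \<open>e \<otimes> tau_{e;n} = j_0(e) j_1(e^perp) ... j_n(e^perp) j_{n+1}(e).\<close>
definition e_tau :: "cmat \<Rightarrow> nat \<Rightarrow> cmat list" where
  "e_tau e n = e # replicate n (e_perp e) @ [e]"

definition recurrent :: "nat \<Rightarrow> (nat \<Rightarrow> nat \<Rightarrow> real) \<Rightarrow> (nat \<Rightarrow> nat \<Rightarrow> real) \<Rightarrow> (nat \<Rightarrow> real) \<Rightarrow> cmat \<Rightarrow> bool" where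
  "recurrent d Pi Q p e \<longleftrightarrow>
     phi_HO d Pi Q p [e] \<noteq> 0 \<and>
     ((\<lambda>n. phi_HO d Pi Q p (e_tau e n) / phi_HO d Pi Q p [e]) sums 1)"

end

theory Submission
  imports Defs
begin

(*
  Let f n be the value of the chain on the word e, e\<^sup>\<perp>, ..., e\<^sup>\<perp> with n copies of
  e\<^sup>\<perp>. As e + e\<^sup>\<perp> = 1 and the transition expectation is unital, the value on
  e \<otimes> \<tau>(e;n) is f n - f (n + 1); the recurrence series telescopes, and recurrence
  amounts to f n \<longrightarrow> 0 together with f 0 = \<Sum>\<^sub>i \<pi>\<^sub>i e\<^sub>i\<^sub>i > 0.

  The map b \<mapsto> E(e\<^sup>\<perp> \<otimes> b) has a Kraus form, so f n is a nonnegative combination of the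
  quadratic forms x \<mapsto> \<langle>x, E\<^sup>n(1) x\<rangle>, which satisfy a recursion. One step removes from
  \<parallel>x\<parallel>\<^sup>2 the part of x leaking into e. That part may vanish, but after two steps the
  Kraus vectors are, up to leaked terms, multiples of the nonnegative vectors
  (\<surd>\<Pi>\<^sub>m\<^sub>l)\<^sub>l, and a nonzero nonnegative vector z always leaks: e z = 0 would give
  \<langle>e\<^sup>\<perp>\<one>, z\<rangle> = \<Sum>\<^sub>j z\<^sub>j, forcing some |(e\<^sup>\<perp>\<one>)\<^sub>j| \<ge> 1, whereas
  \<parallel>e\<^sup>\<perp>\<one>\<parallel>\<^sup>2 = q < 1. So the forms contract by a fixed factor every two steps.
*)

lemma finite_idx [simp]: "finite (idx d)"
  by (simp add: idx_def)

lemma sum_one_m_left: "i \<in> idx d \<Longrightarrow> (\<Sum>j\<in>idx d. one_m i j * f j) = f i"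
  by (simp add: one_m_def if_distrib[of "\<lambda>c. c * _"] cong: if_cong)

lemma sum_one_m_right: "j \<in> idx d \<Longrightarrow> (\<Sum>i\<in>idx d. f i * one_m i j) = f j"
  by (simp add: one_m_def if_distrib[of "\<lambda>c. _ * c"] eq_commute cong: if_cong)

definition mat_vec :: "nat \<Rightarrow> cmat \<Rightarrow> (nat \<Rightarrow> complex) \<Rightarrow> nat \<Rightarrow> complex" where
  "mat_vec d a x = (\<lambda>i. \<Sum>j\<in>idx d. a i j * x j)"

definition inner_vec :: "nat \<Rightarrow> (nat \<Rightarrow> complex) \<Rightarrow> (nat \<Rightarrow> complex) \<Rightarrow> complex" where
  "inner_vec d x y = (\<Sum>i\<in>idx d. cnj (x i) * y i)"

definition sesq :: "nat \<Rightarrow> cmat \<Rightarrow> (nat \<Rightarrow> complex) \<Rightarrow> (nat \<Rightarrow> complex) \<Rightarrow> complex" where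
  "sesq d a x y = (\<Sum>i\<in>idx d. \<Sum>j\<in>idx d. cnj (x i) * a i j * y j)"

definition norm2_vec :: "nat \<Rightarrow> (nat \<Rightarrow> complex) \<Rightarrow> real" where
  "norm2_vec d x = (\<Sum>i\<in>idx d. (cmod (x i))\<^sup>2)"

lemma inner_vec_self: "inner_vec d x x = of_real (norm2_vec d x)"
  by (simp add: inner_vec_def norm2_vec_def complex_norm_square mult.commute del: of_real_power)

lemma sesq_one_m: "sesq d one_m x y = inner_vec d x y"
  unfolding sesq_def inner_vec_def
  by (intro sum.cong refl) (simp add: mult.assoc sum_one_m_left flip: sum_distrib_left)

lemma sesq_e_perp: "sesq d (e_perp a) x y = inner_vec d x y - sesq d a x y"
  by (simp add: sesq_def e_perp_def algebra_simps sum_subtractf flip: sesq_one_m)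

lemma norm2_vec_nonneg: "0 \<le> norm2_vec d x"
  by (simp add: norm2_vec_def sum_nonneg)

lemma norm2_vec_ge_component: "i \<in> idx d \<Longrightarrow> (cmod (x i))\<^sup>2 \<le> norm2_vec d x"
  unfolding norm2_vec_def by (rule member_le_sum) simp_all

lemma norm2_vec_pos: "i \<in> idx d \<Longrightarrow> x i \<noteq> 0 \<Longrightarrow> 0 < norm2_vec d x"
  using norm2_vec_ge_component[of i d x] by (smt (verit) zero_less_norm_iff zero_less_power)

lemma norm2_vec_scale: "norm2_vec d (\<lambda>i. c * x i) = (cmod c)\<^sup>2 * norm2_vec d x"
  by (simp add: norm2_vec_def norm_mult power_mult_distrib sum_distrib_left)

lemma norm2_vec_add_le: "norm2_vec d (\<lambda>i. x i + y i) \<le> 2 * norm2_vec d x + 2 * norm2_vec d y"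
proof -
  have "(cmod (a + b))\<^sup>2 \<le> 2 * (cmod a)\<^sup>2 + 2 * (cmod b)\<^sup>2" for a b :: complex
  proof -
    have "(cmod (a + b))\<^sup>2 \<le> (cmod a + cmod b)\<^sup>2"
      by (simp add: norm_triangle_ineq power_mono)
    also have "\<dots> = 2 * (cmod a)\<^sup>2 + 2 * (cmod b)\<^sup>2 - (cmod a - cmod b)\<^sup>2"
      by (simp add: power2_eq_square algebra_simps)
    finally show ?thesis
      using zero_le_power2[of "cmod a - cmod b"] by linarith
  qed
  then show ?thesis
    unfolding norm2_vec_def by (simp add: sum_distrib_left sum_mono flip: sum.distrib)
qed

section \<open>Orthogonal projections\<close>

lemma projection_idem:
  "is_projection d a \<Longrightarrow> i \<in> idx d \<Longrightarrow> j \<in> idx d \<Longrightarrow> (\<Sum>m\<in>idx d. a i m * a m j) = a i j"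
  by (auto simp: is_projection_def mmult_def)

lemma projection_herm: "is_projection d a \<Longrightarrow> i \<in> idx d \<Longrightarrow> j \<in> idx d \<Longrightarrow> cnj (a j i) = a i j"
  by (auto simp: is_projection_def)

lemma is_projection_e_perp:
  assumes "is_projection d a"
  shows "is_projection d (e_perp a)"
proof -
  have "(\<Sum>m\<in>idx d. e_perp a i m * e_perp a m j) = e_perp a i j"
    if i: "i \<in> idx d" and j: "j \<in> idx d" for i j
  proof -
    have "(\<Sum>m\<in>idx d. e_perp a i m * e_perp a m j)
        = (\<Sum>m\<in>idx d. one_m i m * one_m m j) - (\<Sum>m\<in>idx d. one_m i m * a m j)
          - (\<Sum>m\<in>idx d. a i m * one_m m j) + (\<Sum>m\<in>idx d. a i m * a m j)"
      by (simp add: e_perp_def algebra_simps sum.distrib sum_subtractf)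
    then show ?thesis
      using projection_idem[OF assms i j] sum_one_m_left[OF i] sum_one_m_right[OF j]
      by (simp add: e_perp_def)
  qed
  moreover have "cnj (e_perp a j i) = e_perp a i j" if "i \<in> idx d" "j \<in> idx d" for i j
    using projection_herm[OF assms that] by (auto simp: e_perp_def one_m_def)
  ultimately show ?thesis
    by (simp add: is_projection_def mmult_def)
qed

lemma projection_inner_mat_vec:
  assumes "is_projection d a"
  shows "inner_vec d (mat_vec d a x) (mat_vec d a y) = sesq d a x y"
proof -
  have "inner_vec d (mat_vec d a x) (mat_vec d a y)
      = (\<Sum>m\<in>idx d. \<Sum>i\<in>idx d. \<Sum>j\<in>idx d. cnj (x i) * (a i m * a m j) * y j)"
    unfolding inner_vec_def mat_vec_def cnj_sum sum_product
    by (intro sum.cong refl) (simp add: projection_herm[OF assms] mult_ac)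
  also have "\<dots> = (\<Sum>i\<in>idx d. \<Sum>j\<in>idx d. \<Sum>m\<in>idx d. cnj (x i) * (a i m * a m j) * y j)"
    by (subst sum.swap) (intro sum.cong refl sum.swap)
  also have "\<dots> = sesq d a x y"
    unfolding sesq_def
    by (intro sum.cong refl) (simp add: projection_idem[OF assms] flip: sum_distrib_left sum_distrib_right)
  finally show ?thesis .
qed

lemma projection_norm2_mat_vec:
  "is_projection d a \<Longrightarrow> of_real (norm2_vec d (mat_vec d a x)) = sesq d a x x"
  by (simp add: projection_inner_mat_vec flip: inner_vec_self)

lemma norm2_vec_projection_add:
  assumes "is_projection d a"
  shows "norm2_vec d (mat_vec d a x) + norm2_vec d (mat_vec d (e_perp a) x) = norm2_vec d x"
proof -
  have "complex_of_real (norm2_vec d (mat_vec d a x) + norm2_vec d (mat_vec d (e_perp a) x))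
      = complex_of_real (norm2_vec d x)"
    using assms is_projection_e_perp[OF assms]
    by (simp add: projection_norm2_mat_vec sesq_e_perp inner_vec_self)
  then show ?thesis
    by (simp only: of_real_eq_iff)
qed

lemma projection_diag:
  assumes "is_projection d a" and i: "i \<in> idx d"
  shows "a i i = of_real (norm2_vec d (\<lambda>m. a m i))"
proof -
  define \<delta> where "\<delta> j = (if j = i then 1 else 0 :: complex)" for j
  have "mat_vec d a \<delta> = (\<lambda>m. a m i)"
    using i by (simp add: mat_vec_def \<delta>_def if_distrib[of "\<lambda>c. _ * c"] cong: if_cong)
  moreover have "sesq d a \<delta> \<delta> = a i i"
    using i by (simp add: sesq_def \<delta>_def if_distrib[of "\<lambda>c. _ * c"] if_distrib[of "\<lambda>c. c * _"]
        if_distrib[of cnj] cong: if_cong)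
  ultimately show ?thesis
    using projection_norm2_mat_vec[OF assms(1), of \<delta>] by simp
qed

lemma norm2_e_perp_ones:
  assumes "is_projection d a"
  shows "norm2_vec d (mat_vec d (e_perp a) (\<lambda>_. 1)) = Re (\<Sum>i\<in>idx d. \<Sum>j\<in>idx d. e_perp a i j)"
proof -
  have "of_real (norm2_vec d (mat_vec d (e_perp a) (\<lambda>_. 1))) = sesq d (e_perp a) (\<lambda>_. 1) (\<lambda>_. 1)"
    by (rule projection_norm2_mat_vec[OF is_projection_e_perp[OF assms]])
  also have "\<dots> = (\<Sum>i\<in>idx d. \<Sum>j\<in>idx d. e_perp a i j)"
    by (simp add: sesq_def)
  finally show ?thesis
    by (metis Re_complex_of_real)
qed

lemma inner_e_perp_ones_kernel:
  assumes a: "is_projection d a" and ker: "\<And>i. i \<in> idx d \<Longrightarrow> mat_vec d a y i = 0"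
  shows "inner_vec d (mat_vec d (e_perp a) (\<lambda>_. 1)) y = (\<Sum>j\<in>idx d. y j)"
proof -
  have "mat_vec d (e_perp a) y i = y i" if "i \<in> idx d" for i
    using ker[OF that] that
    by (simp add: mat_vec_def e_perp_def left_diff_distrib sum_subtractf sum_one_m_left)
  then have "inner_vec d (mat_vec d (e_perp a) (\<lambda>_. 1)) y
      = inner_vec d (mat_vec d (e_perp a) (\<lambda>_. 1)) (mat_vec d (e_perp a) y)"
    by (simp add: inner_vec_def)
  also have "\<dots> = inner_vec d (\<lambda>_. 1) y - sesq d a (\<lambda>_. 1) y"
    by (simp add: projection_inner_mat_vec is_projection_e_perp[OF a] sesq_e_perp)
  also have "sesq d a (\<lambda>_. 1) y = 0"
    using ker by (simp add: sesq_def mat_vec_def)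
  finally show ?thesis
    by (simp add: inner_vec_def)
qed

lemma inner_vec_eq_sum_imp_ex_ge_1:
  assumes z: "\<And>j. j \<in> idx d \<Longrightarrow> 0 \<le> z j" and j0: "j0 \<in> idx d" "0 < z j0"
    and u: "inner_vec d u (\<lambda>j. of_real (z j)) = of_real (\<Sum>j\<in>idx d. z j)"
  shows "\<exists>j\<in>idx d. 1 \<le> cmod (u j)"
proof (rule ccontr)
  assume "\<not> ?thesis"
  then have lt: "\<And>j. j \<in> idx d \<Longrightarrow> cmod (u j) < 1"
    by force
  have "(\<Sum>j\<in>idx d. z j) = cmod (inner_vec d u (\<lambda>j. of_real (z j)))"
    unfolding u norm_of_real using z by (simp add: sum_nonneg)
  also have "\<dots> \<le> (\<Sum>j\<in>idx d. cmod (u j) * z j)"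
    unfolding inner_vec_def using z
    by (intro order.trans[OF norm_sum] sum_mono) (simp add: norm_mult)
  also have "\<dots> < (\<Sum>j\<in>idx d. z j)"
  proof (rule sum_strict_mono_ex1)
    show "\<forall>j\<in>idx d. cmod (u j) * z j \<le> z j"
      using lt z by (intro ballI mult_left_le_one_le) (auto intro: less_imp_le)
    show "\<exists>j\<in>idx d. cmod (u j) * z j < z j"
      using lt[OF j0(1)] j0 by (intro bexI[of _ j0]) simp_all
  qed simp
  finally show False
    by simp
qed

lemma projection_nonneg_vec_not_in_kernel:
  assumes a: "is_projection d a"
    and q: "Re (\<Sum>i\<in>idx d. \<Sum>j\<in>idx d. e_perp a i j) < 1"
    and z: "\<And>j. j \<in> idx d \<Longrightarrow> 0 \<le> z j" and j0: "j0 \<in> idx d" "0 < z j0"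
  shows "\<exists>i\<in>idx d. mat_vec d a (\<lambda>j. of_real (z j)) i \<noteq> 0"
proof (rule ccontr)
  define u where "u = mat_vec d (e_perp a) (\<lambda>_. 1)"
  assume "\<not> ?thesis"
  then have "mat_vec d a (\<lambda>j. of_real (z j)) i = 0" if "i \<in> idx d" for i
    using that by blast
  then have "inner_vec d u (\<lambda>j. of_real (z j)) = of_real (\<Sum>j\<in>idx d. z j)"
    unfolding u_def of_real_sum by (rule inner_e_perp_ones_kernel[OF a])
  then obtain j where "j \<in> idx d" "1 \<le> cmod (u j)"
    using inner_vec_eq_sum_imp_ex_ge_1[of d z j0 u] z j0 by blast
  then have "1 \<le> norm2_vec d u"
    using norm2_vec_ge_component[of j d u] one_le_power[of "cmod (u j)" 2] by linarith
  then show False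
    using q by (simp add: u_def norm2_e_perp_ones[OF a])
qed

section \<open>Kraus form of the transition expectation\<close>

lemma sum_rotate3: "(\<Sum>i\<in>A. \<Sum>j\<in>B. \<Sum>k\<in>C. f i j k) = (\<Sum>k\<in>C. \<Sum>i\<in>A. \<Sum>j\<in>B. f i j k)"
  by (subst sum.swap) (rule sum.cong[OF refl], rule sum.swap)

lemma sum_swap2:
  "(\<Sum>i\<in>A. \<Sum>j\<in>B. \<Sum>k\<in>C. \<Sum>l\<in>D. f i j k l) = (\<Sum>k\<in>C. \<Sum>l\<in>D. \<Sum>i\<in>A. \<Sum>j\<in>B. f i j k l)"
  by (subst sum_rotate3) (rule sum.cong[OF refl], rule sum_rotate3)

definition row_sqrt :: "(nat \<Rightarrow> nat \<Rightarrow> real) \<Rightarrow> nat \<Rightarrow> nat \<Rightarrow> complex" where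
  "row_sqrt P i = (\<lambda>l. of_real (sqrt (P i l)))"

definition weighted_vec ::
  "(nat \<Rightarrow> nat \<Rightarrow> real) \<Rightarrow> (nat \<Rightarrow> nat \<Rightarrow> real) \<Rightarrow> nat \<Rightarrow> nat \<Rightarrow> (nat \<Rightarrow> complex) \<Rightarrow> nat \<Rightarrow> complex"
where
  "weighted_vec Pi Q k l x = (\<lambda>j. of_real (sqrt (Q j k) * sqrt (Pi j l)) * x j)"

definition kraus_vec :: "nat \<Rightarrow> (nat \<Rightarrow> nat \<Rightarrow> real) \<Rightarrow> (nat \<Rightarrow> nat \<Rightarrow> real) \<Rightarrow> cmat \<Rightarrow>
    nat \<Rightarrow> nat \<Rightarrow> (nat \<Rightarrow> complex) \<Rightarrow> nat \<Rightarrow> complex"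
where
  "kraus_vec d Pi Q a k m x = (\<lambda>l. mat_vec d a (weighted_vec Pi Q k l x) m)"

lemma P_H_eq_sesq: "P_H d Pi b i j = sesq d b (row_sqrt Pi i) (row_sqrt Pi j)"
  unfolding P_H_def sesq_def row_sqrt_def
  by (intro sum.cong refl) (simp add: real_sqrt_mult mult_ac)

lemma P_HO_one_m: "P_HO d Q one_m i j = inner_vec d (row_sqrt Q i) (row_sqrt Q j)"
  unfolding P_HO_def inner_vec_def row_sqrt_def
  by (intro sum.cong refl) (simp add: real_sqrt_mult mult.commute sum_one_m_left)

lemma sesq_trans_exp:
  assumes "is_projection d a"
  shows "sesq d (trans_exp d Pi Q a b) x x
    = (\<Sum>k\<in>idx d. \<Sum>m\<in>idx d. sesq d b (kraus_vec d Pi Q a k m x) (kraus_vec d Pi Q a k m x))"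
proof -
  let ?w = "\<lambda>k l. weighted_vec Pi Q k l x" and ?K = "\<lambda>k m. kraus_vec d Pi Q a k m x"
  have "sesq d (trans_exp d Pi Q a b) x x
      = (\<Sum>i\<in>idx d. \<Sum>j\<in>idx d. \<Sum>l\<in>idx d. \<Sum>l'\<in>idx d. \<Sum>k\<in>idx d.
           cnj (?w k l i) * a i j * ?w k l' j * b l l')"
    unfolding sesq_def trans_exp_def schur_def P_HO_one_m P_H_eq_sesq inner_vec_def weighted_vec_def row_sqrt_def
    by (simp add: sum_distrib_left sum_distrib_right mult_ac)
  also have "\<dots> = (\<Sum>l\<in>idx d. \<Sum>l'\<in>idx d. \<Sum>k\<in>idx d. sesq d a (?w k l) (?w k l') * b l l')"
    unfolding sesq_def sum_distrib_right
    by (subst sum_swap2) (rule sum.cong[OF refl], rule sum.cong[OF refl], rule sum_rotate3)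
  also have "\<dots> = (\<Sum>l\<in>idx d. \<Sum>l'\<in>idx d. \<Sum>k\<in>idx d. \<Sum>m\<in>idx d. cnj (?K k m l) * b l l' * ?K k m l')"
    unfolding projection_inner_mat_vec[OF assms, symmetric] inner_vec_def kraus_vec_def
    by (simp add: sum_distrib_left mult_ac)
  also have "\<dots> = (\<Sum>k\<in>idx d. \<Sum>m\<in>idx d. sesq d b (?K k m) (?K k m))"
    unfolding sesq_def by (rule sum_swap2)
  finally show ?thesis .
qed

section \<open>Recurrence as a telescoping series\<close>

lemma stochastic_nonneg: "stochastic d P \<Longrightarrow> i \<in> idx d \<Longrightarrow> j \<in> idx d \<Longrightarrow> 0 \<le> P i j"
  by (simp add: stochastic_def)

lemma stochastic_row_sum: "stochastic d P \<Longrightarrow> i \<in> idx d \<Longrightarrow> (\<Sum>j\<in>idx d. P i j) = 1"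
  by (simp add: stochastic_def)

lemma ex_pos_if_sum_eq_1:
  assumes "\<And>j. j \<in> A \<Longrightarrow> 0 \<le> f j" and "sum f A = (1::real)"
  shows "\<exists>j\<in>A. 0 < f j"
proof (rule ccontr)
  assume "\<not> ?thesis"
  then have "sum f A \<le> 0"
    by (intro sum_nonpos) (auto simp: not_less)
  with assms(2) show False
    by simp
qed

lemma norm2_row_sqrt: "stochastic d P \<Longrightarrow> i \<in> idx d \<Longrightarrow> norm2_vec d (row_sqrt P i) = 1"
  by (simp add: norm2_vec_def row_sqrt_def stochastic_nonneg stochastic_row_sum)

lemma P_HO_one_m_diag: "stochastic d Q \<Longrightarrow> i \<in> idx d \<Longrightarrow> P_HO d Q one_m i i = 1"
  by (simp add: P_HO_one_m inner_vec_self norm2_row_sqrt)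

lemma P_H_one_m_diag: "stochastic d Pi \<Longrightarrow> i \<in> idx d \<Longrightarrow> P_H d Pi one_m i i = 1"
  by (simp add: P_H_eq_sesq sesq_one_m inner_vec_self norm2_row_sqrt)

lemma trans_exp_one_m:
  assumes "stochastic d Pi" "stochastic d Q" "i \<in> idx d" "j \<in> idx d"
  shows "trans_exp d Pi Q one_m one_m i j = one_m i j"
proof -
  have "trans_exp d Pi Q one_m one_m i j = one_m i j * P_HO d Q one_m i j * P_H d Pi one_m i j"
    by (simp add: trans_exp_def schur_def)
  moreover have "one_m i j = (if i = j then 1 else 0)"
    by (simp add: one_m_def)
  ultimately show ?thesis
    using assms by (simp add: P_HO_one_m_diag P_H_one_m_diag)
qed

lemma trans_exp_add_right:
  assumes "\<And>i j. i \<in> idx d \<Longrightarrow> j \<in> idx d \<Longrightarrow> c i j = b i j + b' i j"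
  shows "trans_exp d Pi Q a c i j = trans_exp d Pi Q a b i j + trans_exp d Pi Q a b' i j"
  using assms by (simp add: trans_exp_def schur_def P_H_def distrib_left sum.distrib cong: sum.cong)

lemma chain_nest_snoc_split:
  assumes "stochastic d Pi" "stochastic d Q" "i \<in> idx d" "j \<in> idx d"
  shows "chain_nest d Pi Q (as @ [a]) i j + chain_nest d Pi Q (as @ [e_perp a]) i j = chain_nest d Pi Q as i j"
  using assms(3,4)
proof (induction as arbitrary: i j)
  case Nil
  have "trans_exp d Pi Q a one_m i j + trans_exp d Pi Q (e_perp a) one_m i j = trans_exp d Pi Q one_m one_m i j"
    by (simp add: trans_exp_def schur_def e_perp_def algebra_simps)
  with Nil show ?case
    by (simp add: trans_exp_one_m assms(1,2))
next
  case (Cons b as)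
  then show ?case
    by (simp add: trans_exp_add_right[where c = "chain_nest d Pi Q as", symmetric])
qed

lemma phi_H0_eq: "phi_H0 d p x = (\<Sum>j\<in>idx d. of_real (p j) * x j j)"
  unfolding phi_H0_def mtrace_def mmult_def W0_def
  by (simp add: if_distrib[of "\<lambda>c. c * _"] cong: if_cong)

lemma phi_HO_snoc_split:
  "stochastic d Pi \<Longrightarrow> stochastic d Q \<Longrightarrow>
    phi_HO d Pi Q p (as @ [a]) + phi_HO d Pi Q p (as @ [e_perp a]) = phi_HO d Pi Q p as"
  by (simp add: phi_HO_def phi_H0_eq chain_nest_snoc_split flip: sum.distrib distrib_left)

lemma phi_HO_e_tau:
  assumes "stochastic d Pi" "stochastic d Q"
  shows "phi_HO d Pi Q p (e_tau a n)
    = phi_HO d Pi Q p (a # replicate n (e_perp a)) - phi_HO d Pi Q p (a # replicate (Suc n) (e_perp a))"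
  using phi_HO_snoc_split[OF assms, of p "a # replicate n (e_perp a)" a]
  by (simp add: e_tau_def replicate_append_same[symmetric] algebra_simps)

lemma recurrent_if_tendsto_zero:
  assumes "stochastic d Pi" "stochastic d Q"
    and "(\<lambda>n. phi_HO d Pi Q p (a # replicate n (e_perp a))) \<longlonglongrightarrow> 0"
    and "phi_HO d Pi Q p [a] \<noteq> 0"
  shows "recurrent d Pi Q p a"
proof -
  let ?f = "\<lambda>n. phi_HO d Pi Q p (a # replicate n (e_perp a))"
  have "(\<lambda>n. ?f n - ?f (Suc n)) sums (?f 0 - 0)"
    by (rule telescope_sums'[OF assms(3)])
  then have "(\<lambda>n. (?f n - ?f (Suc n)) / ?f 0) sums 1"
    using sums_divide[of _ "?f 0" "?f 0"] assms(4) by simp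
  then show ?thesis
    using assms(4) by (simp add: recurrent_def phi_HO_e_tau[OF assms(1,2)])
qed

lemma phi_HO_cons:
  "stochastic d Q \<Longrightarrow>
    phi_HO d Pi Q p (a # as) = (\<Sum>i\<in>idx d. of_real (p i) * a i i *
      sesq d (chain_nest d Pi Q as) (row_sqrt Pi i) (row_sqrt Pi i))"
  by (simp add: phi_HO_def phi_H0_eq trans_exp_def schur_def P_HO_one_m_diag P_H_eq_sesq mult_ac
      cong: sum.cong)

section \<open>Decay of the complement words\<close>

locale hidden_chain =
  fixes d :: nat and Pi Q :: "nat \<Rightarrow> nat \<Rightarrow> real" and e :: cmat
  assumes stochastic_Pi: "stochastic d Pi" and stochastic_Q: "stochastic d Q"
    and projection: "is_projection d e"
begin

abbreviation kraus :: "nat \<Rightarrow> nat \<Rightarrow> (nat \<Rightarrow> complex) \<Rightarrow> nat \<Rightarrow> complex" where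
  "kraus \<equiv> kraus_vec d Pi Q (e_perp e)"

abbreviation leak_vec :: "nat \<Rightarrow> nat \<Rightarrow> (nat \<Rightarrow> complex) \<Rightarrow> nat \<Rightarrow> complex" where
  "leak_vec k l x \<equiv> mat_vec d e (weighted_vec Pi Q k l x)"

fun transfer_form :: "nat \<Rightarrow> (nat \<Rightarrow> complex) \<Rightarrow> real" where
  "transfer_form 0 x = norm2_vec d x"
| "transfer_form (Suc n) x = (\<Sum>k\<in>idx d. \<Sum>m\<in>idx d. transfer_form n (kraus k m x))"

definition leak :: "(nat \<Rightarrow> complex) \<Rightarrow> real" where
  "leak x = (\<Sum>k\<in>idx d. \<Sum>l\<in>idx d. norm2_vec d (leak_vec k l x))"

lemma sesq_chain_nest_replicate:
  "sesq d (chain_nest d Pi Q (replicate n (e_perp e))) x x = of_real (transfer_form n x)"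
proof (induction n arbitrary: x)
  case 0
  then show ?case
    by (simp add: sesq_one_m inner_vec_self)
next
  case (Suc n)
  then show ?case
    by (simp add: sesq_trans_exp[OF is_projection_e_perp[OF projection]])
qed

lemma transfer_form_nonneg: "0 \<le> transfer_form n x"
  by (induction n arbitrary: x) (simp_all add: norm2_vec_nonneg sum_nonneg)

lemma norm2_weighted_vec_sum: "(\<Sum>k\<in>idx d. \<Sum>l\<in>idx d. norm2_vec d (weighted_vec Pi Q k l x)) = norm2_vec d x"
proof -
  have "(\<Sum>k\<in>idx d. \<Sum>l\<in>idx d. norm2_vec d (weighted_vec Pi Q k l x))
      = (\<Sum>k\<in>idx d. \<Sum>l\<in>idx d. \<Sum>j\<in>idx d. Q j k * (Pi j l * (cmod (x j))\<^sup>2))"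
    unfolding norm2_vec_def weighted_vec_def
    by (intro sum.cong refl) (simp add: norm_mult power_mult_distrib
        stochastic_nonneg[OF stochastic_Pi] stochastic_nonneg[OF stochastic_Q])
  also have "\<dots> = (\<Sum>j\<in>idx d. \<Sum>k\<in>idx d. \<Sum>l\<in>idx d. Q j k * (Pi j l * (cmod (x j))\<^sup>2))"
    by (rule sum_rotate3)
  also have "\<dots> = norm2_vec d x"
    unfolding norm2_vec_def
    by (intro sum.cong refl) (simp add: stochastic_row_sum stochastic_Pi stochastic_Q
        flip: sum_distrib_left sum_distrib_right)
  finally show ?thesis .
qed

lemma transfer_form_one_add_leak: "transfer_form 1 x + leak x = norm2_vec d x"
proof -
  have "transfer_form 1 x = (\<Sum>k\<in>idx d. \<Sum>l\<in>idx d. norm2_vec d (mat_vec d (e_perp e) (weighted_vec Pi Q k l x)))"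
    unfolding transfer_form.simps One_nat_def norm2_vec_def kraus_vec_def
    by (intro sum.cong refl sum.swap)
  moreover have "norm2_vec d (mat_vec d (e_perp e) y) + norm2_vec d (mat_vec d e y) = norm2_vec d y" for y
    using norm2_vec_projection_add[OF projection, of y] by linarith
  ultimately show ?thesis
    by (simp add: leak_def norm2_weighted_vec_sum flip: sum.distrib)
qed

lemma leak_nonneg: "0 \<le> leak x"
  by (simp add: leak_def norm2_vec_nonneg sum_nonneg)

lemma leak_le_norm2: "leak x \<le> norm2_vec d x"
  using transfer_form_one_add_leak[of x] transfer_form_nonneg[of 1 x] by linarith

lemma transfer_form_one_le_norm2: "transfer_form 1 x \<le> norm2_vec d x"
  using transfer_form_one_add_leak[of x] leak_nonneg[of x] by linarith

lemma leak_add_le: "leak (\<lambda>j. x j + y j) \<le> 2 * leak x + 2 * leak y"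
proof -
  have "leak_vec k l (\<lambda>j. x j + y j) = (\<lambda>m. leak_vec k l x m + leak_vec k l y m)" for k l
    by (simp add: mat_vec_def weighted_vec_def algebra_simps sum.distrib)
  then show ?thesis
    unfolding leak_def by (simp add: sum_distrib_left sum_mono norm2_vec_add_le flip: sum.distrib)
qed

lemma leak_scale: "leak (\<lambda>j. c * x j) = (cmod c)\<^sup>2 * leak x"
proof -
  have "leak_vec k l (\<lambda>j. c * x j) = (\<lambda>m. c * leak_vec k l x m)" for k l
    by (simp add: mat_vec_def weighted_vec_def sum_distrib_left mult_ac)
  then show ?thesis
    by (simp add: leak_def norm2_vec_scale sum_distrib_left)
qed

lemma leak_transposed: "(\<Sum>k\<in>idx d. \<Sum>m\<in>idx d. norm2_vec d (\<lambda>l. leak_vec k l x m)) = leak x"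
  unfolding leak_def norm2_vec_def by (intro sum.cong refl sum.swap)

lemma kraus_vec_decomp:
  assumes "m \<in> idx d"
  shows "(\<lambda>l. x m * of_real (sqrt (Q m k)) * row_sqrt Pi m l) = (\<lambda>l. kraus k m x l + leak_vec k l x m)"
proof
  fix l
  have "kraus k m x l = weighted_vec Pi Q k l x m - leak_vec k l x m"
    using sum_one_m_left[OF assms]
    by (simp add: kraus_vec_def mat_vec_def e_perp_def left_diff_distrib sum_subtractf)
  then show "x m * of_real (sqrt (Q m k)) * row_sqrt Pi m l = kraus k m x l + leak_vec k l x m"
    by (simp add: weighted_vec_def row_sqrt_def mult_ac)
qed

lemma leak_kraus_lower_bound:
  assumes "k \<in> idx d" "m \<in> idx d"
  shows "(cmod (x m))\<^sup>2 * Q m k * leak (row_sqrt Pi m)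
    \<le> 2 * leak (kraus k m x) + 2 * norm2_vec d (\<lambda>l. leak_vec k l x m)"
proof -
  have "(cmod (x m))\<^sup>2 * Q m k * leak (row_sqrt Pi m) = leak (\<lambda>l. x m * of_real (sqrt (Q m k)) * row_sqrt Pi m l)"
    using assms by (simp add: leak_scale norm_mult power_mult_distrib stochastic_nonneg[OF stochastic_Q])
  also have "\<dots> \<le> 2 * leak (kraus k m x) + 2 * leak (\<lambda>l. leak_vec k l x m)"
    unfolding kraus_vec_decomp[OF assms(2)] by (rule leak_add_le)
  also have "\<dots> \<le> 2 * leak (kraus k m x) + 2 * norm2_vec d (\<lambda>l. leak_vec k l x m)"
    using leak_le_norm2 by simp
  finally show ?thesis .
qed

lemma transfer_form_two_le:
  assumes \<kappa>: "\<And>m. m \<in> idx d \<Longrightarrow> \<kappa> \<le> leak (row_sqrt Pi m)"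
  shows "transfer_form 2 x \<le> (1 - \<kappa> / 2) * norm2_vec d x"
proof -
  let ?L = "\<Sum>k\<in>idx d. \<Sum>m\<in>idx d. leak (kraus k m x)"
  have "\<kappa> * ((cmod (x m))\<^sup>2 * Q m k) \<le> 2 * leak (kraus k m x) + 2 * norm2_vec d (\<lambda>l. leak_vec k l x m)"
    if "k \<in> idx d" "m \<in> idx d" for k m
  proof -
    have "\<kappa> * ((cmod (x m))\<^sup>2 * Q m k) \<le> (cmod (x m))\<^sup>2 * Q m k * leak (row_sqrt Pi m)"
      using mult_right_mono[OF \<kappa>[OF that(2)], of "(cmod (x m))\<^sup>2 * Q m k"]
        stochastic_nonneg[OF stochastic_Q that(2,1)]
      by (simp add: mult_ac)
    then show ?thesis
      using leak_kraus_lower_bound[OF that, of x] by linarith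
  qed
  then have "(\<Sum>k\<in>idx d. \<Sum>m\<in>idx d. \<kappa> * ((cmod (x m))\<^sup>2 * Q m k))
      \<le> (\<Sum>k\<in>idx d. \<Sum>m\<in>idx d. 2 * leak (kraus k m x) + 2 * norm2_vec d (\<lambda>l. leak_vec k l x m))"
    by (intro sum_mono) simp
  also have "\<dots> = 2 * ?L + 2 * leak x"
    by (simp only: sum.distrib leak_transposed flip: sum_distrib_left)
  also have "(\<Sum>k\<in>idx d. \<Sum>m\<in>idx d. \<kappa> * ((cmod (x m))\<^sup>2 * Q m k)) = \<kappa> * norm2_vec d x"
    unfolding norm2_vec_def
    by (subst sum.swap) (simp add: stochastic_row_sum[OF stochastic_Q] flip: sum_distrib_left)
  finally have "\<kappa> * norm2_vec d x \<le> 2 * ?L + 2 * leak x" .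
  moreover have "transfer_form 2 x = norm2_vec d x - leak x - ?L"
  proof -
    have "transfer_form 1 y = norm2_vec d y - leak y" for y
      using transfer_form_one_add_leak[of y] by linarith
    then have "transfer_form 2 x = transfer_form 1 x - ?L"
      by (simp add: numeral_2_eq_2 sum_subtractf)
    then show ?thesis
      using transfer_form_one_add_leak[of x] by linarith
  qed
  moreover have "(1 - \<kappa> / 2) * norm2_vec d x = norm2_vec d x - \<kappa> * norm2_vec d x / 2"
    by (simp add: algebra_simps)
  ultimately show ?thesis
    by linarith
qed

lemma transfer_form_shift_le:
  assumes "\<And>y. transfer_form n y \<le> c * norm2_vec d y"
  shows "transfer_form (n + k) x \<le> c * transfer_form k x"
proof (induction k arbitrary: x)
  case 0
  then show ?case
    using assms by simp
next
  case (Suc k)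
  have "transfer_form (n + Suc k) x \<le> (\<Sum>k'\<in>idx d. \<Sum>m\<in>idx d. c * transfer_form k (kraus k' m x))"
    by (simp add: Suc.IH sum_mono)
  then show ?case
    by (simp add: sum_distrib_left)
qed

lemma transfer_form_le_power:
  assumes "0 \<le> \<rho>" and two: "\<And>y. transfer_form 2 y \<le> \<rho> * norm2_vec d y"
  shows "transfer_form n x \<le> \<rho> ^ (n div 2) * norm2_vec d x"
proof -
  have even: "transfer_form (2 * N + r) x \<le> \<rho> ^ N * transfer_form r x" for N r
  proof (induction N)
    case (Suc N)
    have "transfer_form (2 * Suc N + r) x \<le> \<rho> * transfer_form (2 * N + r) x"
      using transfer_form_shift_le[OF two, of "2 * N + r" x] by simp
    also have "\<dots> \<le> \<rho> * (\<rho> ^ N * transfer_form r x)"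
      using Suc.IH assms(1) by (rule mult_left_mono)
    finally show ?case
      by simp
  qed simp
  have "transfer_form (n mod 2) x \<le> norm2_vec d x"
    using transfer_form_one_le_norm2[of x] by (cases "n mod 2 = 0") (simp_all add: mod_2_eq_odd)
  then have "\<rho> ^ (n div 2) * transfer_form (n mod 2) x \<le> \<rho> ^ (n div 2) * norm2_vec d x"
    using assms(1) by (simp add: mult_left_mono)
  then show ?thesis
    using even[of "n div 2" "n mod 2"] by simp
qed

end

lemma div_2_tendsto_at_top: "filterlim (\<lambda>n::nat. n div 2) sequentially sequentially"
  unfolding filterlim_at_top eventually_sequentially
  by (metis div_le_mono div_mult_self1_is_m mult.commute zero_less_numeral)

locale hidden_chain_q_lt_1 = hidden_chain +
  assumes q_lt_1: "Re (\<Sum>i\<in>idx d. \<Sum>j\<in>idx d. e_perp e i j) < 1"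
begin

lemma norm2_column_pos:
  assumes i: "i \<in> idx d"
  shows "0 < norm2_vec d (\<lambda>m. e m i)"
proof -
  define z where "z j = (if j = i then 1 else 0 :: real)" for j
  have "mat_vec d e (\<lambda>j. of_real (z j)) = (\<lambda>m. e m i)"
    using i by (simp add: mat_vec_def z_def if_distrib[of complex_of_real] if_distrib[of "\<lambda>c. _ * c"]
        cong: if_cong)
  moreover have "0 \<le> z j" for j
    by (simp add: z_def)
  ultimately have "\<exists>m\<in>idx d. e m i \<noteq> 0"
    using projection_nonneg_vec_not_in_kernel[OF projection q_lt_1, of z i] i by (simp add: z_def)
  then obtain m where "m \<in> idx d" "e m i \<noteq> 0"
    by blast
  then show ?thesis
    by (rule norm2_vec_pos)
qed

lemma leak_row_sqrt_pos:
  assumes m: "m \<in> idx d"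
  shows "0 < leak (row_sqrt Pi m)"
proof -
  obtain j0 where j0: "j0 \<in> idx d" "0 < Pi m j0"
    using ex_pos_if_sum_eq_1 stochastic_nonneg[OF stochastic_Pi m] stochastic_row_sum[OF stochastic_Pi m]
    by blast
  obtain k where k: "k \<in> idx d" "0 < Q j0 k"
    using ex_pos_if_sum_eq_1 stochastic_nonneg[OF stochastic_Q j0(1)] stochastic_row_sum[OF stochastic_Q j0(1)]
    by blast
  obtain l where l: "l \<in> idx d" "0 < Pi j0 l"
    using ex_pos_if_sum_eq_1 stochastic_nonneg[OF stochastic_Pi j0(1)] stochastic_row_sum[OF stochastic_Pi j0(1)]
    by blast
  define z where "z j = sqrt (Q j k) * sqrt (Pi j l) * sqrt (Pi m j)" for j
  have "0 \<le> z j" if "j \<in> idx d" for j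
    using that k(1) l(1) m
    by (simp add: z_def stochastic_nonneg[OF stochastic_Pi] stochastic_nonneg[OF stochastic_Q])
  moreover have "0 < z j0"
    using j0 k l by (simp add: z_def)
  ultimately obtain i where "i \<in> idx d" "mat_vec d e (\<lambda>j. of_real (z j)) i \<noteq> 0"
    using projection_nonneg_vec_not_in_kernel[OF projection q_lt_1, of z j0] j0(1) by blast
  moreover have "leak_vec k l (row_sqrt Pi m) = mat_vec d e (\<lambda>j. of_real (z j))"
    by (simp add: weighted_vec_def row_sqrt_def z_def)
  ultimately have "0 < norm2_vec d (leak_vec k l (row_sqrt Pi m))"
    by (simp add: norm2_vec_pos)
  also have "\<dots> \<le> (\<Sum>l'\<in>idx d. norm2_vec d (leak_vec k l' (row_sqrt Pi m)))"
    using l(1) by (intro member_le_sum) (simp_all add: norm2_vec_nonneg)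
  also have "\<dots> \<le> leak (row_sqrt Pi m)"
    unfolding leak_def using k(1)
    by (intro member_le_sum[where f = "\<lambda>k. \<Sum>l'\<in>idx d. norm2_vec d (leak_vec k l' _)"])
      (simp_all add: norm2_vec_nonneg sum_nonneg)
  finally show ?thesis .
qed

lemma transfer_form_contraction: "\<exists>\<rho>. 0 \<le> \<rho> \<and> \<rho> < 1 \<and> (\<forall>x. transfer_form 2 x \<le> \<rho> * norm2_vec d x)"
proof -
  \<comment> \<open>The extra element 1 keeps \<open>1 - \<kappa> / 2\<close> nonnegative.\<close>
  define \<kappa> where "\<kappa> = Min (insert 1 ((\<lambda>m. leak (row_sqrt Pi m)) ` idx d))"
  have "0 < \<kappa>" "\<kappa> \<le> 1"
    using leak_row_sqrt_pos by (auto simp: \<kappa>_def)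
  moreover have "\<kappa> \<le> leak (row_sqrt Pi m)" if "m \<in> idx d" for m
    using that by (simp add: \<kappa>_def)
  ultimately show ?thesis
    using transfer_form_two_le by (intro exI[of _ "1 - \<kappa> / 2"]) auto
qed

lemma transfer_form_tendsto_zero: "(\<lambda>n. transfer_form n x) \<longlonglongrightarrow> 0"
proof -
  obtain \<rho> where \<rho>: "0 \<le> \<rho>" "\<rho> < 1" "\<And>y. transfer_form 2 y \<le> \<rho> * norm2_vec d y"
    using transfer_form_contraction by blast
  have "(\<lambda>n. \<rho> ^ (n div 2)) \<longlonglongrightarrow> 0"
    by (rule filterlim_compose[OF LIMSEQ_power_zero div_2_tendsto_at_top]) (use \<rho> in simp)
  then have bound: "(\<lambda>n. \<rho> ^ (n div 2) * norm2_vec d x) \<longlonglongrightarrow> 0"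
    by (rule tendsto_mult_left_zero)
  show ?thesis
    by (rule tendsto_sandwich[OF _ _ tendsto_const bound])
      (simp_all add: transfer_form_nonneg transfer_form_le_power[OF \<rho>(1,3)])
qed

lemma phi_HO_e_replicate:
  "phi_HO d Pi Q p (e # replicate n (e_perp e))
    = of_real (\<Sum>i\<in>idx d. p i * norm2_vec d (\<lambda>m. e m i) * transfer_form n (row_sqrt Pi i))"
  by (simp add: phi_HO_cons[OF stochastic_Q] sesq_chain_nest_replicate projection_diag[OF projection]
      cong: sum.cong)

theorem recurrent_if_prob_vector:
  assumes p: "prob_vector d p"
  shows "recurrent d Pi Q p e"
proof (rule recurrent_if_tendsto_zero[OF stochastic_Pi stochastic_Q])
  have "(\<lambda>n. \<Sum>i\<in>idx d. p i * norm2_vec d (\<lambda>m. e m i) * transfer_form n (row_sqrt Pi i)) \<longlonglongrightarrow> 0"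
    by (intro tendsto_null_sum tendsto_mult_right_zero[OF transfer_form_tendsto_zero])
  from tendsto_of_real[OF this, where 'a = complex]
  show "(\<lambda>n. phi_HO d Pi Q p (e # replicate n (e_perp e))) \<longlonglongrightarrow> 0"
    by (simp add: phi_HO_e_replicate)
  obtain i where i: "i \<in> idx d" "0 < p i"
    using ex_pos_if_sum_eq_1[of "idx d" p] p by (auto simp: prob_vector_def)
  have "0 < p i * norm2_vec d (\<lambda>m. e m i)"
    using i norm2_column_pos by simp
  also have "\<dots> \<le> (\<Sum>i\<in>idx d. p i * norm2_vec d (\<lambda>m. e m i))"
    using i(1) p by (intro member_le_sum) (auto simp: prob_vector_def norm2_vec_nonneg)
  finally have "0 < (\<Sum>i\<in>idx d. p i * norm2_vec d (\<lambda>m. e m i))" .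
  moreover have "phi_HO d Pi Q p [e] = of_real (\<Sum>i\<in>idx d. p i * norm2_vec d (\<lambda>m. e m i))"
    using phi_HO_e_replicate[of p 0] by (simp add: norm2_row_sqrt[OF stochastic_Pi] cong: sum.cong)
  ultimately show "phi_HO d Pi Q p [e] \<noteq> 0"
    by (metis less_irrefl of_real_eq_0_iff)
qed

end

theorem mainTheorem7:
  fixes d :: nat and Pi Q :: "nat \<Rightarrow> nat \<Rightarrow> real" and p :: "nat \<Rightarrow> real" and e :: cmat
  assumes "d \<ge> 1"
    and "stochastic d Pi" and "stochastic d Q"
    and "prob_vector d p"
    and "is_projection d e"
    and "Re (\<Sum>i\<in>idx d. \<Sum>j\<in>idx d. e_perp e i j) < 1 / real d"
  shows "recurrent d Pi Q p e"
proof -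
  have "1 / real d \<le> 1"
    using assms(1) by simp
  then interpret hidden_chain_q_lt_1 d Pi Q e
    using assms(2,3,5,6) by unfold_locales auto
  show ?thesis
    by (rule recurrent_if_prob_vector[OF assms(4)])
qed

end
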